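(* Let $U\le B$ be positive integers, $P>0$, $\mathbf{H}\in\mathbb{C}^{U\times B}$, and $\mathbf{s}\in\mathbb{C}^U$ with $\mathbf{s}\neq\mathbf{0}$. Set $$\mathbf{Q}=\mathbf{I}_U-\frac{\mathbf{s}\mathbf{s}^H}{\|\mathbf{s}\|_2^2},\qquad \mathbf{A}=\mathbf{Q}\mathbf{H}\in\mathbb{C}^{U\times B},$$ and let $\ell=\sqrt{P/(2B)}$ and $$\mathcal{B}^B=\{\mathbf{c}\in\mathbb{C}^B:\ |\mathrm{Re}\{c_b\}|\le \ell,\ |\mathrm{Im}\{c_b\}|\le \ell,\ b=1,\dots,B\}.$$ Fix parameters $0<\delta<\gamma$. Consider the problem (BCR$^*$) $$\min_{\mathbf{x}\in\mathcal{B}^B,\ \mathbf{z}\in\mathbb{C}^B}\ E(\mathbf{z},\mathbf{x}),\qquad E(\mathbf{z},\mathbf{x})=\|\mathbf{A}\mathbf{z}\|_2^2+\gamma\|\mathbf{z}-\mathbf{x}\|_2^2-\delta\|\mathbf{x}\|_2^2 .$$ Define the sequence (algorithm C1PO) by $\mathbf{x}^{(1)}=\mathbf{H}^H\mathbf{s}$ and, for $t=1,2,\dots$, $$\mathbf{z}^{(t+1)}=(\mathbf{I}_B+\gamma^{-1}\mathbf{A}^H\mathbf{A})^{-1}\mathbf{x}^{(t)},\qquad \mathbf{x}^{(t+1)}=\mathrm{proj}(\mathbf{z}^{(t+1)}),$$ where $\mathrm{proj}$ acts entrywise as $$\mathrm{proj}(z)=\mathrm{sgn}(\mathrm{Re}\{z\})\min\Big\{\tfrac{\gamma}{\gamma-\delta}|\mathrm{Re}\{z\}|,\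 \ell\Big\}+j\,\mathrm{sgn}(\mathrm{Im}\{z\})\min\Big\{\tfrac{\gamma}{\gamma-\delta}|\mathrm{Im}\{z\}|,\ \ell\Big\}.$$ Then any limit point of the sequence $\{(\mathbf{x}^{(t)},\mathbf{z}^{(t)})\}$ is a stationary point of (BCR$^*$).
   Context: $\mathrm{sgn}(a)=+1$ for $a\ge 0$ and $-1$ for $a<0$; $j$ is the imaginary unit. Complex vectors are identified with real vectors of twice the dimension (real and imaginary parts), with real inner product $\mathrm{Re}\{\mathbf{u}^H\mathbf{v}\}$. A stationary point of (BCR$^*$) is a pair $(\mathbf{z}^\star,\mathbf{x}^\star)$ with $\mathbf{x}^\star\in\mathcal{B}^B$ satisfying the first-order optimality conditions: the gradient of $E$ with respect to $\mathbf{z}$ vanishes at $(\mathbf{z}^\star,\mathbf{x}^\star)$, and the negative gradient of $E$ with respect to $\mathbf{x}$ at $(\mathbf{z}^\star,\mathbf{x}^\star)$ lies in the normal cone of the convex set $\mathcal{B}^B$ at $\mathbf{x}^\star$. *)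

theory Defs
  imports "HOL-Analysis.Analysis"
begin

definition cadj :: "complex^'n^'m \<Rightarrow> complex^'m^'n" where
  "cadj A = (\<chi> i j. cnj (A $ j $ i))"

text \<open>Sign with the paper's convention sgn(a) = +1 for a >= 0.\<close>
definition psgn :: "real \<Rightarrow> real" where
  "psgn a = (if a \<ge> 0 then 1 else -1)"

definition projc :: "real \<Rightarrow> real \<Rightarrow> real \<Rightarrow> complex \<Rightarrow> complex" where
  "projc \<gamma> \<delta> l z =
     Complex (psgn (Re z) * min (\<gamma> / (\<gamma> - \<delta>) * \<bar>Re z\<bar>) l)
             (psgn (Im z) * min (\<gamma> / (\<gamma> - \<delta>) * \<bar>Im z\<bar>) l)"

definition projv :: "real \<Rightarrow> real \<Rightarrow> real \<Rightarrow> complex^'b \<Rightarrow> complex^'b" where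
  "projv \<gamma> \<delta> l z = (\<chi> b. projc \<gamma> \<delta> l (z $ b))"

definition box_set :: "real \<Rightarrow> (complex^'b) set" where
  "box_set l = {c. \<forall>b. \<bar>Re (c $ b)\<bar> \<le> l \<and> \<bar>Im (c $ b)\<bar> \<le> l}"

text \<open>Normal cone of a convex set C at x (w.r.t. the real inner product Re(u^H v),
  which is the inner product on complex^'b in HOL-Analysis).\<close>
definition normal_cone :: "('a::real_inner) set \<Rightarrow> 'a \<Rightarrow> 'a set" where
  "normal_cone C x = {v. \<forall>y\<in>C. inner v (y - x) \<le> 0}"

definition has_gradient :: "('a::real_inner \<Rightarrow> real) \<Rightarrow> 'a \<Rightarrow> 'a \<Rightarrow> bool" where
  "has_gradient f g p \<longleftrightarrow> (f has_derivative (\<lambda>h. inner g h)) (at p)"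

definition stationary_point ::
  "('a::real_inner \<Rightarrow> 'a \<Rightarrow> real) \<Rightarrow> 'a set \<Rightarrow> 'a \<Rightarrow> 'a \<Rightarrow> bool" where
  "stationary_point E C zs xs \<longleftrightarrow> xs \<in> C \<and>
     has_gradient (\<lambda>z. E z xs) 0 zs \<and>
     (\<exists>g. has_gradient (\<lambda>x. E zs x) g xs \<and> - g \<in> normal_cone C xs)"

definition limit_point :: "(nat \<Rightarrow> 'a::topological_space) \<Rightarrow> 'a \<Rightarrow> bool" where
  "limit_point f p \<longleftrightarrow> (\<exists>r. strict_mono r \<and> (f \<circ> r) \<longlonglongrightarrow> p)"

end

theory Submission
  imports Defs
begin

text \<open>C1PO is block coordinate descent on \<open>E\<close>. The \<open>z\<close>-update solves the normal equation
  \<open>A\<^sup>H A z + \<gamma> (z - x) = 0\<close>, so it minimises the convex quadratic \<open>E(\<cdot>, x)\<close>. The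
  \<open>x\<close>-update is the exact minimiser over the box of the \<open>(\<gamma> - \<delta>)\<close>-strongly convex function
  \<open>E(z, \<cdot>)\<close>; hence it satisfies the variational inequality
  \<open>\<langle>\<gamma> z - (\<gamma> - \<delta>) proj z, y - proj z\<rangle> \<le> 0\<close> on the box, and \<open>E\<close> drops by at least
  \<open>(\<gamma> - \<delta>) \<parallel>x\<^sub>t\<^sub>+\<^sub>1 - x\<^sub>t\<parallel>\<^sup>2\<close> per iteration. As \<open>E\<close> is bounded below on the box, successive
  \<open>x\<close>-iterates merge, so along a convergent subsequence the normal equation and the variational
  inequality both pass to the limit, and together they are the stationarity conditions.\<close>

lemma scaleR_matrix_vector_mult:
  fixes M :: "'a::real_algebra_1^'n::finite^'m"
  shows "(c *\<^sub>R M) *v v = c *\<^sub>R (M *v v)"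
  by (simp add: vec_eq_iff matrix_vector_mult_def scaleR_sum_right)

lemma inner_cnj_mult_left: "inner (cnj a * w) (v::complex) = inner w (a * v)"
  by (simp add: inner_complex_def algebra_simps)

lemma inner_cadj_left:
  fixes A :: "complex^'b::finite^'u::finite"
  shows "inner (cadj A *v w) v = inner w (A *v v)"
proof -
  have "inner (cadj A *v w) v = (\<Sum>b\<in>UNIV. \<Sum>u\<in>UNIV. inner (w$u) (A$u$b * v$b))"
    by (simp add: inner_vec_def matrix_vector_mult_def cadj_def inner_sum_left inner_cnj_mult_left)
  also have "\<dots> = (\<Sum>u\<in>UNIV. \<Sum>b\<in>UNIV. inner (w$u) (A$u$b * v$b))"
    by (rule sum.swap)
  also have "\<dots> = inner w (A *v v)"
    by (simp add: inner_vec_def matrix_vector_mult_def inner_sum_right)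
  finally show ?thesis .
qed

lemma inner_cadj_right:
  fixes A :: "complex^'b::finite^'u::finite"
  shows "inner v (cadj A *v w) = inner (A *v v) w"
  using inner_cadj_left[of A w v] by (simp add: inner_commute)

lemma invertible_mat_1_plus_gram:
  fixes A :: "complex^'b::finite^'u::finite"
  assumes "0 \<le> c"
  shows "invertible (mat 1 + c *\<^sub>R (cadj A ** A))"
proof -
  let ?N = "mat 1 + c *\<^sub>R (cadj A ** A)"
  have "v = 0" if "?N *v v = 0" for v
  proof -
    have "?N *v v = v + c *\<^sub>R (cadj A *v (A *v v))"
      by (simp add: matrix_vector_mult_add_rdistrib scaleR_matrix_vector_mult
          matrix_vector_mul_assoc)
    then have "inner (?N *v v) v = inner v v + c * inner (A *v v) (A *v v)"
      by (simp add: inner_add_left inner_cadj_left)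
    then have "inner v v + c * inner (A *v v) (A *v v) = 0"
      using that by simp
    moreover have "0 \<le> c * inner (A *v v) (A *v v)"
      using assms by simp
    ultimately show "v = 0"
      by (metis add_nonneg_eq_0_iff inner_ge_zero inner_eq_zero_iff)
  qed
  then show ?thesis
    by (simp add: invertible_left_inverse matrix_left_invertible_ker)
qed

lemma matrix_mul_matrix_inv_right: "invertible N \<Longrightarrow> N ** matrix_inv N = mat 1"
  unfolding invertible_def matrix_inv_def by (rule someI_ex[THEN conjunct1])

lemma gram_normal_equation:
  fixes A :: "complex^'b::finite^'u::finite"
  assumes "\<gamma> \<noteq> 0" and "(mat 1 + inverse \<gamma> *\<^sub>R (cadj A ** A)) *v z = x"
  shows "cadj A *v (A *v z) + \<gamma> *\<^sub>R (z - x) = 0"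
proof -
  have "\<gamma> *\<^sub>R x = \<gamma> *\<^sub>R z + cadj A *v (A *v z)"
    using assms(1) by (simp add: matrix_vector_mult_add_rdistrib scaleR_matrix_vector_mult
        matrix_vector_mul_assoc scaleR_add_right flip: assms(2))
  then show ?thesis
    by (simp add: algebra_simps)
qed

lemma abs_psgn_mult_min_le: "0 \<le> l \<Longrightarrow> 0 \<le> c \<Longrightarrow> \<bar>psgn a * min (c * \<bar>a\<bar>) l\<bar> \<le> l"
  by (auto simp: psgn_def abs_mult)

lemma clip_variational_ineq:
  fixes a q l \<gamma> \<delta> :: real
  assumes "0 < \<delta>" "\<delta> < \<gamma>" "\<bar>q\<bar> \<le> l"
  shows "(\<gamma> * a - (\<gamma> - \<delta>) * (psgn a * min (\<gamma> / (\<gamma> - \<delta>) * \<bar>a\<bar>) l)) *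
         (q - psgn a * min (\<gamma> / (\<gamma> - \<delta>) * \<bar>a\<bar>) l) \<le> 0"
proof (cases "\<gamma> / (\<gamma> - \<delta>) * \<bar>a\<bar> \<le> l")
  case True
  then have "(\<gamma> - \<delta>) * (psgn a * min (\<gamma> / (\<gamma> - \<delta>) * \<bar>a\<bar>) l) = \<gamma> * a"
    using assms(2) by (auto simp: psgn_def)
  then show ?thesis by simp
next
  case False
  then have "(\<gamma> - \<delta>) * l < \<gamma> * \<bar>a\<bar>"
    using assms(2) by (simp add: field_simps)
  then show ?thesis
    using assms(1,3) False by (cases "a \<ge> 0") (auto simp: psgn_def mult_le_0_iff)
qed

lemma projv_in_box_set:
  assumes "0 \<le> l" "0 < \<delta>" "\<delta> < \<gamma>"
  shows "projv \<gamma> \<delta> l z \<in> box_set l"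
  using assms abs_psgn_mult_min_le[of l "\<gamma> / (\<gamma> - \<delta>)"]
  unfolding box_set_def projv_def projc_def by auto

lemma projv_variational_ineq:
  assumes "0 < \<delta>" "\<delta> < \<gamma>" "y \<in> box_set l"
  shows "inner (\<gamma> *\<^sub>R z - (\<gamma> - \<delta>) *\<^sub>R projv \<gamma> \<delta> l z) (y - projv \<gamma> \<delta> l z) \<le> 0"
proof -
  let ?p = "\<lambda>a. psgn a * min (\<gamma> / (\<gamma> - \<delta>) * \<bar>a\<bar>) l"
  have "inner (\<gamma> *\<^sub>R z - (\<gamma> - \<delta>) *\<^sub>R projv \<gamma> \<delta> l z) (y - projv \<gamma> \<delta> l z) =
    (\<Sum>b\<in>UNIV. (\<gamma> * Re (z$b) - (\<gamma> - \<delta>) * ?p (Re (z$b))) * (Re (y$b) - ?p (Re (z$b)))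
       + (\<gamma> * Im (z$b) - (\<gamma> - \<delta>) * ?p (Im (z$b))) * (Im (y$b) - ?p (Im (z$b))))"
    by (simp add: inner_vec_def inner_complex_def projv_def projc_def)
  also have "\<dots> \<le> 0"
    using assms unfolding box_set_def
    by (intro sum_nonpos add_nonpos_nonpos clip_variational_ineq) auto
  finally show ?thesis .
qed

lemma closed_box_set: "closed (box_set l)"
  unfolding box_set_def
  by (intro closed_Collect_all closed_Collect_conj closed_Collect_le continuous_intros)

lemma power2_norm_le_of_box_set:
  fixes y :: "complex^'b::finite"
  assumes "y \<in> box_set l"
  shows "(norm y)\<^sup>2 \<le> 2 * real CARD('b) * l\<^sup>2"
proof -
  have "(norm y)\<^sup>2 = (\<Sum>b\<in>UNIV. (Re (y$b))\<^sup>2 + (Im (y$b))\<^sup>2)"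
    unfolding power2_norm_eq_inner inner_vec_def inner_complex_def by (simp add: power2_eq_square)
  also have "\<dots> \<le> (\<Sum>b\<in>(UNIV::'b set). 2 * l\<^sup>2)"
  proof (rule sum_mono)
    fix b
    have "\<bar>Re (y$b)\<bar> \<le> l" "\<bar>Im (y$b)\<bar> \<le> l"
      using assms unfolding box_set_def by blast+
    then have "\<bar>Re (y$b)\<bar> \<le> \<bar>l\<bar>" "\<bar>Im (y$b)\<bar> \<le> \<bar>l\<bar>"
      by auto
    then show "(Re (y$b))\<^sup>2 + (Im (y$b))\<^sup>2 \<le> 2 * l\<^sup>2"
      by (simp add: abs_le_square_iff)
  qed
  finally show ?thesis by simp
qed

definition bcr_energy ::
  "complex^'b::finite^'u::finite \<Rightarrow> real \<Rightarrow> real \<Rightarrow> complex^'b \<Rightarrow> complex^'b \<Rightarrow> real" where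
  "bcr_energy A \<gamma> \<delta> z x = (norm (A *v z))\<^sup>2 + \<gamma> * (norm (z - x))\<^sup>2 - \<delta> * (norm x)\<^sup>2"

lemma bcr_energy_expand_z:
  "bcr_energy A \<gamma> \<delta> w x = bcr_energy A \<gamma> \<delta> z x
    + 2 * inner (cadj A *v (A *v z) + \<gamma> *\<^sub>R (z - x)) (w - z)
    + (norm (A *v (w - z)))\<^sup>2 + \<gamma> * (norm (w - z))\<^sup>2"
  by (simp add: bcr_energy_def power2_norm_eq_inner inner_cadj_left inner_cadj_right
      inner_commute algebra_simps)

lemma bcr_energy_expand_x:
  "bcr_energy A \<gamma> \<delta> z y = bcr_energy A \<gamma> \<delta> z x
    - 2 * inner (\<gamma> *\<^sub>R z - (\<gamma> - \<delta>) *\<^sub>R x) (y - x) + (\<gamma> - \<delta>) * (norm (y - x))\<^sup>2"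
  by (simp add: bcr_energy_def power2_norm_eq_inner inner_commute algebra_simps)

lemma bcr_energy_le_of_normal_equation:
  assumes "0 \<le> \<gamma>" and "cadj A *v (A *v z) + \<gamma> *\<^sub>R (z - x) = 0"
  shows "bcr_energy A \<gamma> \<delta> z x \<le> bcr_energy A \<gamma> \<delta> w x"
  using bcr_energy_expand_z[of A \<gamma> \<delta> w x z] assms by simp

lemma bcr_energy_projv_decrease:
  assumes "0 < \<delta>" "\<delta> < \<gamma>" "y \<in> box_set l"
  shows "bcr_energy A \<gamma> \<delta> z (projv \<gamma> \<delta> l z) + (\<gamma> - \<delta>) * (norm (y - projv \<gamma> \<delta> l z))\<^sup>2
    \<le> bcr_energy A \<gamma> \<delta> z y"
  using bcr_energy_expand_x[of A \<gamma> \<delta> z y "projv \<gamma> \<delta> l z"] projv_variational_ineq[OF assms]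
  by simp

lemma bcr_energy_lower_bound:
  fixes x :: "complex^'b::finite"
  assumes "0 \<le> \<gamma>" "0 \<le> \<delta>" "x \<in> box_set l"
  shows "- \<delta> * (2 * real CARD('b) * l\<^sup>2) \<le> bcr_energy A \<gamma> \<delta> z x"
proof -
  have "\<delta> * (norm x)\<^sup>2 \<le> \<delta> * (2 * real CARD('b) * l\<^sup>2)"
    using power2_norm_le_of_box_set[OF assms(3)] assms(2) by (rule mult_left_mono)
  moreover have "0 \<le> \<gamma> * (norm (z - x))\<^sup>2"
    using assms(1) by simp
  moreover have "0 \<le> (norm (A *v z))\<^sup>2"
    by simp
  ultimately show ?thesis
    unfolding bcr_energy_def by linarith
qed

lemma has_gradient_bcr_energy_z:
  "has_gradient (\<lambda>z. bcr_energy A \<gamma> \<delta> z x) (2 *\<^sub>R (cadj A *v (A *v z) + \<gamma> *\<^sub>R (z - x))) z"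
proof -
  have "((\<lambda>z. inner (A *v z) (A *v z) + \<gamma> * inner (z - x) (z - x) - \<delta> * inner x x) has_derivative
      (\<lambda>h. inner (A *v z) (A *v h) + inner (A *v h) (A *v z)
         + \<gamma> * (inner (z - x) (h - 0) + inner (h - 0) (z - x)) - \<delta> * 0)) (at z)"
    by (intro derivative_intros bounded_linear_imp_has_derivative matrix_vector_mul_bounded_linear)
  moreover have "(\<lambda>h. inner (A *v z) (A *v h) + inner (A *v h) (A *v z)
      + \<gamma> * (inner (z - x) (h - 0) + inner (h - 0) (z - x)) - \<delta> * 0)
    = inner (2 *\<^sub>R (cadj A *v (A *v z) + \<gamma> *\<^sub>R (z - x)))"
    by (rule ext) (simp add: inner_cadj_left inner_cadj_right inner_commute algebra_simps)
  ultimately show ?thesis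
    unfolding has_gradient_def bcr_energy_def power2_norm_eq_inner by metis
qed

lemma has_gradient_bcr_energy_x:
  "has_gradient (\<lambda>x. bcr_energy A \<gamma> \<delta> z x) (2 *\<^sub>R (\<gamma> *\<^sub>R (x - z) - \<delta> *\<^sub>R x)) x"
proof -
  have "((\<lambda>x. inner (A *v z) (A *v z) + \<gamma> * inner (z - x) (z - x) - \<delta> * inner x x) has_derivative
      (\<lambda>h. 0 + \<gamma> * (inner (z - x) (0 - h) + inner (0 - h) (z - x)) - \<delta> * (inner x h + inner h x)))
      (at x)"
    by (intro derivative_intros)
  moreover have "(\<lambda>h. 0 + \<gamma> * (inner (z - x) (0 - h) + inner (0 - h) (z - x))
      - \<delta> * (inner x h + inner h x)) = inner (2 *\<^sub>R (\<gamma> *\<^sub>R (x - z) - \<delta> *\<^sub>R x))"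
    by (rule ext) (simp add: inner_commute algebra_simps)
  ultimately show ?thesis
    unfolding has_gradient_def bcr_energy_def power2_norm_eq_inner by metis
qed

lemma stationary_point_bcr_energyI:
  assumes "xs \<in> box_set l"
    and "cadj A *v (A *v zs) + \<gamma> *\<^sub>R (zs - xs) = 0"
    and "\<And>y. y \<in> box_set l \<Longrightarrow> inner (\<gamma> *\<^sub>R zs - (\<gamma> - \<delta>) *\<^sub>R xs) (y - xs) \<le> 0"
  shows "stationary_point (bcr_energy A \<gamma> \<delta>) (box_set l) zs xs"
proof -
  have "- (2 *\<^sub>R (\<gamma> *\<^sub>R (xs - zs) - \<delta> *\<^sub>R xs)) = 2 *\<^sub>R (\<gamma> *\<^sub>R zs - (\<gamma> - \<delta>) *\<^sub>R xs)"
    by (simp add: algebra_simps)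
  then have "- (2 *\<^sub>R (\<gamma> *\<^sub>R (xs - zs) - \<delta> *\<^sub>R xs)) \<in> normal_cone (box_set l) xs"
    using assms(3) by (simp add: normal_cone_def)
  then show ?thesis
    using assms(1,2) has_gradient_bcr_energy_z[of A \<gamma> \<delta> xs zs]
      has_gradient_bcr_energy_x[of A \<gamma> \<delta> zs xs]
    unfolding stationary_point_def by auto
qed

lemma sufficient_decrease_tendsto_zero:
  fixes a d :: "nat \<Rightarrow> real"
  assumes dec: "\<And>t. a (Suc t) + c * d t \<le> a t" and bound: "\<And>t. b \<le> a t"
    and c: "0 < c" and d: "\<And>t. 0 \<le> d t"
  shows "d \<longlonglongrightarrow> 0"
proof (rule tendsto_sandwich[OF _ _ tendsto_const])
  have "a (Suc t) \<le> a t" for t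
    using dec[of t] mult_nonneg_nonneg[OF less_imp_le[OF c] d[of t]] by linarith
  then obtain L where "a \<longlonglongrightarrow> L"
    using decseq_convergent[OF decseq_SucI] bound by metis
  then show "(\<lambda>t. (a t - a (Suc t)) / c) \<longlonglongrightarrow> 0"
    using tendsto_diff[OF _ LIMSEQ_Suc] by (intro tendsto_divide_zero) fastforce
  show "\<forall>\<^sub>F t in sequentially. 0 \<le> d t"
    using d by simp
  have "d t \<le> (a t - a (Suc t)) / c" for t
    using dec[of t] c by (simp add: pos_le_divide_eq mult.commute)
  then show "\<forall>\<^sub>F t in sequentially. d t \<le> (a t - a (Suc t)) / c"
    by simp
qed

lemma strict_mono_pred_of_subseq:
  assumes "strict_mono r"
  obtains s where "strict_mono s" and "\<And>k. r (Suc k) = Suc (s k)"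
proof
  define s where "s k = r (Suc k) - 1" for k
  show rs: "r (Suc k) = Suc (s k)" for k
    using seq_suble[OF assms, of "Suc k"] by (simp add: s_def)
  show "strict_mono s"
    unfolding strict_mono_Suc_iff using assms rs by (metis Suc_less_eq lessI strict_mono_def)
qed

lemma tendsto_of_subseq_Suc:
  fixes f :: "nat \<Rightarrow> 'a::real_normed_vector"
  assumes "(\<lambda>t. f (Suc t) - f t) \<longlonglongrightarrow> 0" and "strict_mono s"
    and "(\<lambda>k. f (Suc (s k))) \<longlonglongrightarrow> p"
  shows "(\<lambda>k. f (s k)) \<longlonglongrightarrow> p"
proof -
  have "(\<lambda>k. f (Suc (s k)) - f (s k)) \<longlonglongrightarrow> 0"
    using LIMSEQ_subseq_LIMSEQ[OF assms(1,2)] by (simp add: o_def)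
  then have "(\<lambda>k. f (Suc (s k)) - (f (Suc (s k)) - f (s k))) \<longlonglongrightarrow> p - 0"
    using assms(3) by (intro tendsto_diff)
  then show ?thesis
    by simp
qed

locale c1po =
  fixes A :: "complex^'b::finite^'u::finite"
    and \<gamma> \<delta> l :: real
    and x z :: "nat \<Rightarrow> complex^'b"
  assumes \<delta>_pos: "0 < \<delta>" and \<delta>_less_\<gamma>: "\<delta> < \<gamma>" and l_nonneg: "0 \<le> l"
    and z_update: "\<And>t. z (Suc t) = matrix_inv (mat 1 + inverse \<gamma> *\<^sub>R (cadj A ** A)) *v x t"
    and x_update: "\<And>t. x (Suc t) = projv \<gamma> \<delta> l (z (Suc t))"
begin

abbreviation E where "E \<equiv> bcr_energy A \<gamma> \<delta>"

lemma z_normal_equation: "cadj A *v (A *v z (Suc t)) + \<gamma> *\<^sub>R (z (Suc t) - x t) = 0"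
proof -
  have "invertible (mat 1 + inverse \<gamma> *\<^sub>R (cadj A ** A))"
    using \<delta>_pos \<delta>_less_\<gamma> by (intro invertible_mat_1_plus_gram) simp
  then have "(mat 1 + inverse \<gamma> *\<^sub>R (cadj A ** A)) *v z (Suc t) = x t"
    by (simp add: z_update matrix_vector_mul_assoc matrix_mul_matrix_inv_right)
  then show ?thesis
    using \<delta>_pos \<delta>_less_\<gamma> by (intro gram_normal_equation) auto
qed

lemma x_in_box_set: "x (Suc t) \<in> box_set l"
  using projv_in_box_set[OF l_nonneg \<delta>_pos \<delta>_less_\<gamma>] by (simp add: x_update)

lemma energy_decrease:
  "E (z (Suc (Suc t))) (x (Suc (Suc t))) + (\<gamma> - \<delta>) * (norm (x (Suc (Suc t)) - x (Suc t)))\<^sup>2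
    \<le> E (z (Suc t)) (x (Suc t))"
proof -
  have "E (z (Suc (Suc t))) (x (Suc t)) \<le> E (z (Suc t)) (x (Suc t))"
    using \<delta>_pos \<delta>_less_\<gamma> z_normal_equation by (intro bcr_energy_le_of_normal_equation) auto
  moreover have "E (z (Suc (Suc t))) (x (Suc (Suc t))) + (\<gamma> - \<delta>) * (norm (x (Suc t) - x (Suc (Suc t))))\<^sup>2
      \<le> E (z (Suc (Suc t))) (x (Suc t))"
    using bcr_energy_projv_decrease[OF \<delta>_pos \<delta>_less_\<gamma> x_in_box_set] by (simp add: x_update)
  ultimately show ?thesis
    by (simp add: norm_minus_commute)
qed

lemma x_step_tendsto_zero: "(\<lambda>t. x (Suc t) - x t) \<longlonglongrightarrow> 0"
proof -
  have "(\<lambda>t. (norm (x (Suc (Suc t)) - x (Suc t)))\<^sup>2) \<longlonglongrightarrow> 0"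
    using energy_decrease \<delta>_pos \<delta>_less_\<gamma>
    by (intro sufficient_decrease_tendsto_zero[where a = "\<lambda>t. E (z (Suc t)) (x (Suc t))"
          and c = "\<gamma> - \<delta>" and b = "- \<delta> * (2 * real CARD('b) * l\<^sup>2)"]
        bcr_energy_lower_bound x_in_box_set) auto
  then have "(\<lambda>t. x (Suc (Suc t)) - x (Suc t)) \<longlonglongrightarrow> 0"
    using tendsto_real_sqrt tendsto_norm_zero_iff by fastforce
  then show ?thesis
    by (rule LIMSEQ_imp_Suc)
qed

lemma limit_point_stationary:
  assumes "limit_point (\<lambda>t. (x t, z t)) (xs, zs)"
  shows "stationary_point E (box_set l) zs xs"
proof -
  obtain r where r: "strict_mono r" and lim: "(\<lambda>k. (x (r k), z (r k))) \<longlonglongrightarrow> (xs, zs)"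
    using assms unfolding limit_point_def o_def by blast
  obtain s where s: "strict_mono s" and rs: "\<And>k. r (Suc k) = Suc (s k)"
    using strict_mono_pred_of_subseq[OF r] by blast
  have x_sub: "(\<lambda>k. x (Suc (s k))) \<longlonglongrightarrow> xs" and z_sub: "(\<lambda>k. z (Suc (s k))) \<longlonglongrightarrow> zs"
    using LIMSEQ_Suc[OF tendsto_fst[OF lim]] LIMSEQ_Suc[OF tendsto_snd[OF lim]]
    by (simp_all add: rs)
  have x_pred: "(\<lambda>k. x (s k)) \<longlonglongrightarrow> xs"
    using x_step_tendsto_zero s x_sub by (rule tendsto_of_subseq_Suc)
  have "xs \<in> box_set l"
    using closed_sequentially[OF closed_box_set _ x_sub] x_in_box_set by blast
  moreover have "cadj A *v (A *v zs) + \<gamma> *\<^sub>R (zs - xs) = 0"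
  proof (rule LIMSEQ_unique)
    show "(\<lambda>k. cadj A *v (A *v z (Suc (s k))) + \<gamma> *\<^sub>R (z (Suc (s k)) - x (s k)))
        \<longlonglongrightarrow> cadj A *v (A *v zs) + \<gamma> *\<^sub>R (zs - xs)"
      by (intro tendsto_intros bounded_linear.tendsto[OF matrix_vector_mul_bounded_linear]
          z_sub x_pred)
  qed (simp add: z_normal_equation)
  moreover have "inner (\<gamma> *\<^sub>R zs - (\<gamma> - \<delta>) *\<^sub>R xs) (y - xs) \<le> 0" if "y \<in> box_set l" for y
  proof (rule LIMSEQ_le_const2)
    show "(\<lambda>k. inner (\<gamma> *\<^sub>R z (Suc (s k)) - (\<gamma> - \<delta>) *\<^sub>R x (Suc (s k))) (y - x (Suc (s k))))
        \<longlonglongrightarrow> inner (\<gamma> *\<^sub>R zs - (\<gamma> - \<delta>) *\<^sub>R xs) (y - xs)"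
      by (intro tendsto_intros x_sub z_sub)
  qed (use projv_variational_ineq[OF \<delta>_pos \<delta>_less_\<gamma> that] in \<open>simp add: x_update\<close>)
  ultimately show ?thesis
    by (rule stationary_point_bcr_energyI)
qed

end

theorem theorem1:
  fixes H :: "complex^'b::finite^'u::finite"
    and s :: "complex^'u"
    and P \<gamma> \<delta> :: real
    and x z :: "nat \<Rightarrow> complex^'b"
  assumes UB: "CARD('u) \<le> CARD('b)"
    and P: "P > 0"
    and s: "s \<noteq> 0"
    and \<delta>: "0 < \<delta>" and \<delta>\<gamma>: "\<delta> < \<gamma>"
    and x0: "x 0 = cadj H *v s"
    and zrec: "\<And>t. z (Suc t) =
        matrix_inv (mat 1 + inverse \<gamma> *\<^sub>R
          (cadj ((mat 1 - (\<chi> i k. s $ i * cnj (s $ k) / complex_of_real ((norm s)\<^sup>2))) ** H)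
           ** ((mat 1 - (\<chi> i k. s $ i * cnj (s $ k) / complex_of_real ((norm s)\<^sup>2))) ** H)))
        *v x t"
    and xrec: "\<And>t. x (Suc t) = projv \<gamma> \<delta> (sqrt (P / (2 * real CARD('b)))) (z (Suc t))"
  shows "\<forall>xs zs. limit_point (\<lambda>t. (x t, z t)) (xs, zs) \<longrightarrow>
           stationary_point
             (\<lambda>zv xv. (norm (((mat 1 - (\<chi> i k. s $ i * cnj (s $ k) / complex_of_real ((norm s)\<^sup>2))) ** H) *v zv))\<^sup>2
                      + \<gamma> * (norm (zv - xv))\<^sup>2 - \<delta> * (norm xv)\<^sup>2)
             (box_set (sqrt (P / (2 * real CARD('b))))) zs xs"
proof -
  let ?A = "(mat 1 - (\<chi> i k. s $ i * cnj (s $ k) / complex_of_real ((norm s)\<^sup>2))) ** H"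
  interpret c1po ?A \<gamma> \<delta> "sqrt (P / (2 * real CARD('b)))" x z
    using \<delta> \<delta>\<gamma> P zrec xrec by unfold_locales auto
  show ?thesis
    using limit_point_stationary by (simp add: bcr_energy_def[abs_def])
qed

end
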